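(* Let $S\subseteq N$ with $|S|=k\ge2$ and suppose that for all $v\in S$ and all distinct $i,j\in N$, $$\frac{\partial^2(-\log p_{v,S}(\theta))}{\partial\theta_i\partial\theta_j}\Big|_{\theta=\mathbf 0}\le0.$$ Then for every $y\in S$, $$\big\|\nabla^2(-\log p_{y,S}(\theta))|_{\theta=\mathbf 0}\big\|_2\le k^4\Big(\frac{\partial p_k(\mathbf 0)}{\partial x_1}\Big)^2.$$
   Context: $F$ is a CDF of a zero-mean random variable with continuously differentiable density $f$, $f(x)\to0$ as $|x|\to\infty$, with differentiation under the integral sign permitted. $p_k(x)=\int_{\mathbb R}\prod_{v=1}^{k-1}F(x_v+z)f(z)dz$ for $x\in\mathbb R^{k-1}$; $p_{y,S}(\theta)=p_k((\theta_y-\theta_u)_{u\in S\setminus\{y\}})$ for $\theta\in\mathbb R^n$; $\frac{\partial p_k(\mathbf 0)}{\partial x_1}=\int f(z)^2F(z)^{k-2}dz$. $\|\cdot\|_2$ is the spectral norm. *)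

theory Defs
  imports "HOL-Analysis.Analysis"
begin

text \<open>Standing assumptions on the distribution: \<open>f\<close> is a continuously differentiable
  probability density (derivative \<open>f'\<close>) of a zero-mean random variable with CDF \<open>F\<close>,
  \<open>f(x) \<to> 0\<close> as \<open>|x| \<to> \<infinity>\<close>, and differentiation under the integral sign is
  permitted (rendered as a local domination condition on the derivative terms).\<close>
definition std_assumptions ::
  "(real \<Rightarrow> real) \<Rightarrow> (real \<Rightarrow> real) \<Rightarrow> (real \<Rightarrow> real) \<Rightarrow> bool" where
  "std_assumptions F f f' \<longleftrightarrow>
     (\<forall>x. f x \<ge> 0) \<and> integrable lborel f \<and> (LINT z|lborel. f z) = 1 \<and>
     (\<forall>x. F x = (LINT z:{..x}|lborel. f z)) \<and>
     integrable lborel (\<lambda>z. z * f z) \<and> (LINT z|lborel. z * f z) = 0 \<and>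
     (\<forall>x. (f has_real_derivative f' x) (at x)) \<and> continuous_on UNIV f' \<and>
     (f \<longlongrightarrow> 0) at_top \<and> (f \<longlongrightarrow> 0) at_bot \<and>
     (\<exists>\<delta>>0. \<exists>h. integrable lborel h \<and>
        (\<forall>t z. \<bar>t\<bar> \<le> \<delta> \<longrightarrow> \<bar>f' (t + z)\<bar> * f z \<le> h z))"

definition pk :: "(real \<Rightarrow> real) \<Rightarrow> (real \<Rightarrow> real) \<Rightarrow> nat \<Rightarrow> (nat \<Rightarrow> real) \<Rightarrow> real" where
  "pk F f k x = (LINT z|lborel. (\<Prod>v\<in>{1..k-1}. F (x v + z)) * f z)"

definition dpk0 :: "(real \<Rightarrow> real) \<Rightarrow> (real \<Rightarrow> real) \<Rightarrow> nat \<Rightarrow> real" where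
  "dpk0 F f k = deriv (\<lambda>t. pk F f k (\<lambda>v. if v = 1 then t else 0)) 0"

text \<open>\<open>p_{y,S}(\<theta>) = p_k((\<theta>_y - \<theta>_u)_{u \<in> S - {y}})\<close>; \<open>p_k\<close> is symmetric in its
  arguments, so the enumeration of \<open>S - {y}\<close> is immaterial and we write the product directly.\<close>
definition pyS :: "(real \<Rightarrow> real) \<Rightarrow> (real \<Rightarrow> real) \<Rightarrow> 'n set \<Rightarrow> 'n \<Rightarrow> real^'n \<Rightarrow> real" where
  "pyS F f S y \<theta> = (LINT z|lborel. (\<Prod>u\<in>S - {y}. F (\<theta>$y - \<theta>$u + z)) * f z)"

definition partial_deriv :: "'n::finite \<Rightarrow> (real^'n \<Rightarrow> real) \<Rightarrow> real^'n \<Rightarrow> real" where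
  "partial_deriv i g \<theta> = deriv (\<lambda>t. g (\<theta> + t *\<^sub>R axis i 1)) 0"

definition hessian :: "(real^'n::finite \<Rightarrow> real) \<Rightarrow> real^'n \<Rightarrow> real^'n^'n" where
  "hessian g \<theta> = (\<chi> i j. partial_deriv i (partial_deriv j g) \<theta>)"

definition spec_norm :: "real^'n::finite^'m::finite \<Rightarrow> real" where
  "spec_norm A = onorm (\<lambda>x. A *v x)"

end

theory Submission
  imports Defs
begin

text \<open>
  Put \<open>U = S - {y}\<close>, \<open>k = |S|\<close>, \<open>a = \<partial>p\<^sub>k(0)/\<partial>x\<^sub>1 = \<integral> f\<^sup>2 F\<^sup>k\<^sup>-\<^sup>2\<close> and
  \<open>b = \<integral> f\<^sup>3 F\<^sup>k\<^sup>-\<^sup>3 \<ge> 0\<close>. Differentiating twice under the integral sign, and using the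
  integration by parts \<open>\<integral> f' F\<^sup>k\<^sup>-\<^sup>2 f = -(k - 2) b / 2\<close> to eliminate \<open>f'\<close>, the Hessian of
  \<open>-log p\<^sub>y\<^sub>,\<^sub>S\<close> at \<open>0\<close> is
  \<open>(k\<^sup>2 b / 2) \<Sum>\<^sub>u d\<^sub>u d\<^sub>u\<^sup>T + (k\<^sup>2 a\<^sup>2 - k b) \<sigma> \<sigma>\<^sup>T\<close> with \<open>d\<^sub>u = e\<^sub>y - e\<^sub>u\<close> (\<open>u \<in> U\<close>) and
  \<open>\<sigma> = \<Sum>\<^sub>u d\<^sub>u\<close>. This matrix has only four distinct nonzero entries, so its Frobenius norm
  is explicit. The hypothesis that its \<open>(u, y)\<close> entry is nonpositive reads
  \<open>(k - 2) k b / 2 \<le> (k - 1) k\<^sup>2 a\<^sup>2\<close>, and under this constraint the Frobenius norm, hence the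
  spectral norm, is at most \<open>k\<^sup>4 a\<^sup>2\<close>.
\<close>

section \<open>Derivatives of parameter integrals\<close>

lemma has_real_derivative_integral_lborel:
  fixes \<phi> \<phi>' :: "real \<Rightarrow> real \<Rightarrow> real" and h :: "real \<Rightarrow> real"
  assumes r: "r > 0"
    and der: "\<And>t z. \<bar>t - t0\<bar> < r \<Longrightarrow> ((\<lambda>t. \<phi> t z) has_real_derivative \<phi>' t z) (at t)"
    and int: "\<And>t. \<bar>t - t0\<bar> < r \<Longrightarrow> integrable lborel (\<phi> t)"
    and meas: "\<phi>' t0 \<in> borel_measurable lborel"
    and hint: "integrable lborel h"
    and bnd: "\<And>t z. \<bar>t - t0\<bar> < r \<Longrightarrow> \<bar>\<phi>' t z\<bar> \<le> h z"
  shows "((\<lambda>t. LINT z|lborel. \<phi> t z) has_real_derivative (LINT z|lborel. \<phi>' t0 z)) (at t0)"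
  unfolding has_field_derivative_iff
proof (subst tendsto_at_iff_sequentially, intro allI impI)
  fix X :: "nat \<Rightarrow> real"
  assume "\<forall>i. X i \<in> UNIV - {t0}" and X_lim: "X \<longlonglongrightarrow> t0"
  then have X_ne: "\<And>i. X i \<noteq> t0" by auto
  have "eventually (\<lambda>n. dist (X n) t0 < r) sequentially"
    using X_lim r by (simp add: tendsto_iff)
  then obtain N where "\<forall>n\<ge>N. \<bar>X n - t0\<bar> < r"
    by (auto simp: eventually_sequentially dist_real_def)
  then have N: "\<And>n. \<bar>X (n + N) - t0\<bar> < r" by simp
  define q where "q n z = (\<phi> (X (n + N)) z - \<phi> t0 z) / (X (n + N) - t0)" for n z
  have int0: "integrable lborel (\<phi> t0)" using int r by simp
  have q_meas: "q n \<in> borel_measurable lborel" for n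
    unfolding q_def using int[OF N[of n]] int0 by measurable
  have q_lim: "AE z in lborel. (\<lambda>n. q n z) \<longlonglongrightarrow> \<phi>' t0 z"
  proof (rule AE_I2)
    fix z
    have "((\<lambda>t. (\<phi> t z - \<phi> t0 z) / (t - t0)) \<longlongrightarrow> \<phi>' t0 z) (at t0)"
      using der[of t0 z] r by (simp add: has_field_derivative_iff)
    moreover have "(\<lambda>n. X (n + N)) \<longlonglongrightarrow> t0"
      using X_lim by (rule LIMSEQ_ignore_initial_segment)
    ultimately show "(\<lambda>n. q n z) \<longlonglongrightarrow> \<phi>' t0 z"
      unfolding q_def using X_ne
      by (subst (asm) tendsto_at_iff_sequentially) (auto simp: comp_def)
  qed
  have q_bound: "AE z in lborel. norm (q n z) \<le> h z" for n
  proof (rule AE_I2)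
    fix z
    have "norm (\<phi> (X (n + N)) z - \<phi> t0 z) \<le> h z * norm (X (n + N) - t0)"
    proof (rule field_differentiable_bound[where S="ball t0 r" and f="\<lambda>t. \<phi> t z" and f'="\<lambda>t. \<phi>' t z"])
      fix t assume "t \<in> ball t0 r"
      then have t: "\<bar>t - t0\<bar> < r" by (simp add: dist_real_def abs_minus_commute)
      show "((\<lambda>t. \<phi> t z) has_field_derivative \<phi>' t z) (at t within ball t0 r)"
        using der[OF t] by (rule has_field_derivative_at_within)
      show "norm (\<phi>' t z) \<le> h z" using bnd[OF t] by simp
    qed (use r N[of n] in \<open>simp_all add: dist_real_def abs_minus_commute\<close>)
    then show "norm (q n z) \<le> h z"
      using X_ne[of "n + N"] by (simp add: q_def abs_divide divide_le_eq)
  qed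
  have "(\<lambda>n. LINT z|lborel. q n z) \<longlonglongrightarrow> (LINT z|lborel. \<phi>' t0 z)"
    by (rule integral_dominated_convergence[OF meas q_meas hint q_lim q_bound])
  moreover have "(LINT z|lborel. q n z) =
      ((LINT z|lborel. \<phi> (X (n + N)) z) - (LINT z|lborel. \<phi> t0 z)) / (X (n + N) - t0)" for n
    unfolding q_def using int[OF N[of n]] int0 by simp
  ultimately have "(\<lambda>n. ((LINT z|lborel. \<phi> (X (n + N)) z) - (LINT z|lborel. \<phi> t0 z)) / (X (n + N) - t0))
      \<longlonglongrightarrow> (LINT z|lborel. \<phi>' t0 z)"
    by simp
  then show "((\<lambda>t. ((LINT z|lborel. \<phi> t z) - (LINT z|lborel. \<phi> t0 z)) / (t - t0)) \<circ> X)
     \<longlonglongrightarrow> (LINT z|lborel. \<phi>' t0 z)"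
    unfolding comp_def by (rule LIMSEQ_offset[where k=N])
qed

lemma hessian_eq_deriv_deriv:
  "hessian \<phi> x $ i $ j = deriv (\<lambda>s. deriv (\<lambda>t. \<phi> (x + s *\<^sub>R axis i 1 + t *\<^sub>R axis j 1)) 0) 0"
  by (simp add: hessian_def partial_deriv_def)

lemma deriv_deriv_neg_ln:
  fixes g :: "real \<Rightarrow> real \<Rightarrow> real"
  assumes dt: "\<And>s. ((\<lambda>t. g s t) has_real_derivative G s) (at 0)"
    and ds: "((\<lambda>s. g s 0) has_real_derivative g') (at 0)"
    and dG: "(G has_real_derivative G') (at 0)"
    and pos: "g 0 0 > 0"
  shows "deriv (\<lambda>s. deriv (\<lambda>t. - ln (g s t)) 0) 0 = - ((G' * g 0 0 - G 0 * g') / (g 0 0)\<^sup>2)"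
proof -
  have "eventually (\<lambda>s. g s 0 > 0) (at 0)"
    using DERIV_isCont[OF ds] pos unfolding isCont_def by (auto intro: order_tendstoD)
  then have pos_near: "eventually (\<lambda>s. g s 0 > 0) (nhds 0)"
    using pos by (auto simp: eventually_at_filter elim: eventually_mono)
  have "deriv (\<lambda>t. - ln (g s t)) 0 = - (G s / g s 0)" if "g s 0 > 0" for s
    using dt[of s] that by (intro DERIV_imp_deriv) (auto intro!: derivative_eq_intros)
  then have "eventually (\<lambda>s. deriv (\<lambda>t. - ln (g s t)) 0 = - (G s / g s 0)) (nhds 0)"
    using pos_near by (auto elim: eventually_mono)
  moreover have "((\<lambda>s. - (G s / g s 0)) has_real_derivative - ((G' * g 0 0 - G 0 * g') / (g 0 0)\<^sup>2)) (at 0)"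
    using DERIV_minus[OF DERIV_divide[OF dG ds]] pos by (simp add: power2_eq_square)
  ultimately show ?thesis
    by (intro DERIV_imp_deriv) (rule DERIV_cong_ev[THEN iffD2, OF refl _ refl])
qed

section \<open>Matrices built from the vectors \<open>e\<^sub>y - e\<^sub>u\<close>\<close>

lemma spec_norm_le_frobenius:
  fixes A :: "real^'n::finite^'m::finite"
  shows "spec_norm A \<le> sqrt (\<Sum>i\<in>UNIV. \<Sum>j\<in>UNIV. (A$i$j)\<^sup>2)"
  unfolding spec_norm_def
proof (rule onorm_le)
  fix x :: "real^'n"
  let ?Q = "\<Sum>i\<in>UNIV. \<Sum>j\<in>UNIV. (A$i$j)\<^sup>2"
  have norm_sq: "(norm v)\<^sup>2 = (\<Sum>i\<in>UNIV. (v$i)\<^sup>2)" for v :: "real^'k::finite"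
    by (simp add: norm_vec_def L2_set_def sum_nonneg)
  have "(norm (A *v x))\<^sup>2 = (\<Sum>i\<in>UNIV. (\<Sum>j\<in>UNIV. A$i$j * x$j)\<^sup>2)"
    by (simp add: norm_sq matrix_vector_mult_def)
  also have "\<dots> \<le> (\<Sum>i\<in>UNIV. (\<Sum>j\<in>UNIV. (A$i$j)\<^sup>2) * (\<Sum>j\<in>UNIV. (x$j)\<^sup>2))"
    by (intro sum_mono Cauchy_Schwarz_ineq_sum)
  also have "\<dots> = (sqrt ?Q * norm x)\<^sup>2"
    by (simp add: norm_sq sum_distrib_right power_mult_distrib sum_nonneg)
  finally show "norm (A *v x) \<le> sqrt ?Q * norm x"
    by (rule power2_le_imp_le) (simp add: sum_nonneg)
qed

lemma sum_mult_sum_remove: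
  fixes a b :: "'a \<Rightarrow> 'b::comm_ring"
  assumes "finite U"
  shows "(\<Sum>u\<in>U. b u * (\<Sum>v\<in>U - {u}. a v)) = (\<Sum>u\<in>U. a u) * (\<Sum>u\<in>U. b u) - (\<Sum>u\<in>U. a u * b u)"
proof -
  have "(\<Sum>u\<in>U. b u * (\<Sum>v\<in>U - {u}. a v)) = (\<Sum>u\<in>U. b u * (\<Sum>v\<in>U. a v) - a u * b u)"
    using assms by (intro sum.cong refl) (simp add: sum_diff1 algebra_simps)
  then show ?thesis by (simp add: sum_subtractf sum_distrib_right[symmetric] mult.commute)
qed

text \<open>The gradient of \<open>\<theta> \<mapsto> \<theta>\<^sub>y - \<theta>\<^sub>u\<close>, the arguments of \<open>p\<^sub>k\<close> in \<open>p\<^sub>y\<^sub>,\<^sub>S\<close>.\<close>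
definition basis_diff :: "'a \<Rightarrow> 'a \<Rightarrow> 'a \<Rightarrow> real" where
  "basis_diff y u i = (if y = i then 1 else 0) - (if u = i then 1 else 0)"

lemma abs_basis_diff_le_1: "\<bar>basis_diff y u i\<bar> \<le> 1"
  by (simp add: basis_diff_def)

lemma sum_basis_diff:
  assumes "finite U" "y \<notin> U"
  shows "(\<Sum>u\<in>U. basis_diff y u i) = (if i = y then real (card U) else 0) - (if i \<in> U then 1 else 0)"
  using assms by (auto simp: basis_diff_def sum_subtractf)

lemma sum_basis_diff_mult:
  assumes "finite U" "y \<notin> U"
  shows "(\<Sum>u\<in>U. basis_diff y u i * basis_diff y u j)
    = (if i = y \<and> j = y then real (card U) else 0) - (if i = y \<and> j \<in> U then 1 else 0)
      - (if j = y \<and> i \<in> U then 1 else 0) + (if i = j \<and> i \<in> U then 1 else 0)"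
  using assms unfolding basis_diff_def
  by (auto simp: algebra_simps sum.distrib sum_subtractf if_distrib[where f="\<lambda>x. x * _"] cong: if_cong)

lemma sum_sq_star_matrix:
  fixes M :: "'n::finite \<Rightarrow> 'n \<Rightarrow> real"
  assumes y: "y \<notin> U"
    and outside: "\<And>i j. i \<notin> insert y U \<or> j \<notin> insert y U \<Longrightarrow> M i j = 0"
    and yy: "M y y = d\<^sub>0"
    and yu: "\<And>u. u \<in> U \<Longrightarrow> M y u = d\<^sub>1" and uy: "\<And>u. u \<in> U \<Longrightarrow> M u y = d\<^sub>1"
    and uu: "\<And>u. u \<in> U \<Longrightarrow> M u u = d\<^sub>2"
    and uw: "\<And>u w. u \<in> U \<Longrightarrow> w \<in> U \<Longrightarrow> u \<noteq> w \<Longrightarrow> M u w = d\<^sub>3"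
  defines "m \<equiv> real (card U)"
  shows "(\<Sum>i\<in>UNIV. \<Sum>j\<in>UNIV. (M i j)\<^sup>2) = d\<^sub>0\<^sup>2 + 2 * m * d\<^sub>1\<^sup>2 + m * d\<^sub>2\<^sup>2 + m * (m - 1) * d\<^sub>3\<^sup>2"
proof -
  have fin: "finite U" by simp
  have row_u: "(\<Sum>j\<in>insert y U. (M u j)\<^sup>2) = d\<^sub>1\<^sup>2 + d\<^sub>2\<^sup>2 + (m - 1) * d\<^sub>3\<^sup>2" if u: "u \<in> U" for u
  proof -
    have "card U \<ge> 1" using u fin by (auto simp: Suc_le_eq card_gt_0_iff)
    have "(\<Sum>j\<in>insert y U. (M u j)\<^sup>2) = (M u y)\<^sup>2 + ((M u u)\<^sup>2 + (\<Sum>j\<in>U - {u}. (M u j)\<^sup>2))"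
      using u y by (simp add: sum.remove)
    also have "(\<Sum>j\<in>U - {u}. (M u j)\<^sup>2) = (\<Sum>j\<in>U - {u}. d\<^sub>3\<^sup>2)"
      using u by (intro sum.cong refl) (auto simp: uw)
    also have "\<dots> = (m - 1) * d\<^sub>3\<^sup>2"
      using u \<open>card U \<ge> 1\<close> by (simp add: m_def of_nat_diff)
    finally show ?thesis using u by (simp add: uy uu)
  qed
  have rows: "(\<Sum>j\<in>UNIV. (M i j)\<^sup>2) = (\<Sum>j\<in>insert y U. (M i j)\<^sup>2)" for i
    by (rule sum.mono_neutral_right) (auto simp: outside)
  have "(\<Sum>i\<in>UNIV. \<Sum>j\<in>UNIV. (M i j)\<^sup>2) = (\<Sum>i\<in>insert y U. \<Sum>j\<in>insert y U. (M i j)\<^sup>2)"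
    unfolding rows by (rule sum.mono_neutral_right) (auto simp: outside)
  also have "\<dots> = ((M y y)\<^sup>2 + (\<Sum>j\<in>U. (M y j)\<^sup>2)) + (\<Sum>u\<in>U. \<Sum>j\<in>insert y U. (M u j)\<^sup>2)"
    using y by simp
  also have "\<dots> = d\<^sub>0\<^sup>2 + 2 * m * d\<^sub>1\<^sup>2 + m * d\<^sub>2\<^sup>2 + m * (m - 1) * d\<^sub>3\<^sup>2"
    by (simp add: yy yu row_u m_def algebra_simps)
  finally show ?thesis .
qed

lemma sum_sq_basis_diff_matrix:
  fixes y :: "'n::finite" and \<kappa> \<mu> :: real
  assumes y: "y \<notin> U"
  defines "m \<equiv> real (card U)"
  shows "(\<Sum>i\<in>UNIV. \<Sum>j\<in>UNIV. (\<kappa> * (\<Sum>u\<in>U. basis_diff y u i * basis_diff y u j)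
            + \<mu> * (\<Sum>u\<in>U. basis_diff y u i) * (\<Sum>u\<in>U. basis_diff y u j))\<^sup>2)
    = (\<kappa> * m + \<mu> * m\<^sup>2)\<^sup>2 + 2 * m * (\<kappa> + \<mu> * m)\<^sup>2 + m * (\<kappa> + \<mu>)\<^sup>2 + m * (m - 1) * \<mu>\<^sup>2"
proof -
  have "(\<Sum>i\<in>UNIV. \<Sum>j\<in>UNIV. (\<kappa> * (\<Sum>u\<in>U. basis_diff y u i * basis_diff y u j)
            + \<mu> * (\<Sum>u\<in>U. basis_diff y u i) * (\<Sum>u\<in>U. basis_diff y u j))\<^sup>2)
    = (\<kappa> * m + \<mu> * m\<^sup>2)\<^sup>2 + 2 * m * (- (\<kappa> + \<mu> * m))\<^sup>2 + m * (\<kappa> + \<mu>)\<^sup>2 + m * (m - 1) * \<mu>\<^sup>2"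
    unfolding m_def
    by (rule sum_sq_star_matrix[OF y])
       (use y in \<open>auto simp: sum_basis_diff sum_basis_diff_mult power2_eq_square algebra_simps\<close>)
  then show ?thesis by (simp only: power2_minus)
qed

lemma sum_sq_basis_diff_matrix_le:
  fixes m :: nat and a b \<kappa> \<mu> :: real
  assumes m: "m \<ge> 1" and b: "b \<ge> 0"
  defines "k \<equiv> real m + 1"
  defines "\<kappa> \<equiv> k\<^sup>2 * b / 2" and "\<mu> \<equiv> k\<^sup>2 * a\<^sup>2 - k * b"
  assumes off_diag: "\<kappa> + \<mu> * real m \<ge> 0"
  shows "(\<kappa> * real m + \<mu> * (real m)\<^sup>2)\<^sup>2 + 2 * real m * (\<kappa> + \<mu> * real m)\<^sup>2
      + real m * (\<kappa> + \<mu>)\<^sup>2 + real m * (real m - 1) * \<mu>\<^sup>2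
    \<le> (k ^ 4 * a\<^sup>2)\<^sup>2"
proof -
  define A where "A = k\<^sup>2 * a\<^sup>2"
  define X where "X = (real m - 1) * k * b / 2"
  have A: "A \<ge> 0" and X: "X \<ge> 0" using m b by (auto simp: A_def X_def k_def)
  have "m * A - X = \<kappa> + \<mu> * m"
    by (simp add: X_def A_def \<kappa>_def \<mu>_def k_def power2_eq_square field_simps)
  \<comment> \<open>this is where the sign of the off-diagonal entry \<open>-(\<kappa> + \<mu> m)\<close> enters\<close>
  then have X_le: "X \<le> m * A" using off_diag by linarith
  have bracket: "(m * A - X)\<^sup>2 + (real m - 1) * (k * b)\<^sup>2 / 4 \<le> m\<^sup>2 * A\<^sup>2"
  proof (cases "m = 1")
    case True
    then show ?thesis using A X_le by (simp add: X_def power2_eq_square)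
  next
    case False
    then have m2: "real m \<ge> 2" using m by linarith
    have "m * A \<le> 2 * (real m - 1) * A" using m2 A by (intro mult_right_mono) auto
    then have "m * X * (X - 2 * (real m - 1) * A) \<le> 0"
      using X X_le m2 by (intro mult_nonneg_nonpos) auto
    also have "m * X * (X - 2 * (real m - 1) * A)
        = (real m - 1) * ((m * A - X)\<^sup>2 + X\<^sup>2 / (real m - 1) - m\<^sup>2 * A\<^sup>2)"
      using m2 by (simp add: power2_eq_square field_simps)
    finally have "(m * A - X)\<^sup>2 + X\<^sup>2 / (real m - 1) \<le> m\<^sup>2 * A\<^sup>2"
      using m2 by (simp add: mult_le_0_iff)
    moreover have "(real m - 1) * (k * b)\<^sup>2 / 4 = X\<^sup>2 / (real m - 1)"
      using m2 by (simp add: X_def power2_eq_square field_simps)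
    ultimately show ?thesis by linarith
  qed
  have "(\<kappa> * real m + \<mu> * (real m)\<^sup>2)\<^sup>2 + 2 * real m * (\<kappa> + \<mu> * real m)\<^sup>2
      + real m * (\<kappa> + \<mu>)\<^sup>2 + real m * (real m - 1) * \<mu>\<^sup>2
      = k\<^sup>2 * ((m * A - X)\<^sup>2 + (real m - 1) * (k * b)\<^sup>2 / 4)"
    unfolding \<kappa>_def \<mu>_def A_def X_def k_def by (simp add: power2_eq_square field_simps)
  also have "\<dots> \<le> k\<^sup>2 * (m\<^sup>2 * A\<^sup>2)"
    using bracket by (intro mult_left_mono) simp_all
  also have "\<dots> \<le> k\<^sup>2 * (k\<^sup>2 * A\<^sup>2)"
    by (intro mult_left_mono mult_right_mono power_mono) (auto simp: k_def)
  also have "\<dots> = (k ^ 4 * a\<^sup>2)\<^sup>2"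
    by (simp add: A_def power2_eq_square power4_eq_xxxx)
  finally show ?thesis .
qed

section \<open>The density \<open>f\<close> and its distribution function \<open>F\<close>\<close>

locale std_density =
  fixes F f f' :: "real \<Rightarrow> real"
  assumes std: "std_assumptions F f f'"
begin

lemma f_nonneg: "f x \<ge> 0" using std by (simp add: std_assumptions_def)
lemma integrable_f: "integrable lborel f" using std by (simp add: std_assumptions_def)
lemma integral_f: "(LINT z|lborel. f z) = 1" using std by (simp add: std_assumptions_def)
lemma F_eq_integral: "F x = (LINT z:{..x}|lborel. f z)" using std by (simp add: std_assumptions_def)
lemma f_deriv: "(f has_real_derivative f' x) (at x)" using std by (simp add: std_assumptions_def)
lemma isCont_f': "isCont f' x"
  using std by (simp add: std_assumptions_def continuous_on_eq_continuous_at)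
lemma f_at_top: "(f \<longlongrightarrow> 0) at_top" using std by (simp add: std_assumptions_def)
lemma f_at_bot: "(f \<longlongrightarrow> 0) at_bot" using std by (simp add: std_assumptions_def)
lemma f'_dominated:
  obtains \<delta> h where "\<delta> > 0" "integrable lborel h" "\<And>t z. \<bar>t\<bar> \<le> \<delta> \<Longrightarrow> \<bar>f' (t + z)\<bar> * f z \<le> h z"
  using std by (auto simp: std_assumptions_def)

lemma isCont_f: "isCont f x"
  using f_deriv by (rule DERIV_isCont)

lemma f_measurable[measurable]: "f \<in> borel_measurable borel"
  by (intro borel_measurable_continuous_onI continuous_at_imp_continuous_on ballI isCont_f)

lemma f'_measurable[measurable]: "f' \<in> borel_measurable borel"
  by (intro borel_measurable_continuous_onI continuous_at_imp_continuous_on ballI isCont_f')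

lemma f_bounded: "\<exists>M>0. \<forall>x. f x \<le> M"
proof -
  have "eventually (\<lambda>x. dist (f x) 0 < 1) at_top" using f_at_top by (simp add: tendsto_iff)
  then obtain R1 where R1: "\<And>x. x \<ge> R1 \<Longrightarrow> \<bar>f x\<bar> < 1"
    by (auto simp: eventually_at_top_linorder dist_real_def)
  have "eventually (\<lambda>x. dist (f x) 0 < 1) at_bot" using f_at_bot by (simp add: tendsto_iff)
  then obtain R2 where R2: "\<And>x. x \<le> R2 \<Longrightarrow> \<bar>f x\<bar> < 1"
    by (auto simp: eventually_at_bot_linorder dist_real_def)
  have "compact (f ` {R2..R1})"
    by (intro compact_continuous_image continuous_at_imp_continuous_on ballI isCont_f) simp
  then obtain B where B: "\<And>x. x \<in> {R2..R1} \<Longrightarrow> \<bar>f x\<bar> \<le> B"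
    by (meson compact_imp_bounded bounded_real image_eqI)
  show ?thesis
  proof (intro exI[of _ "max 1 B"] conjI allI)
    fix x
    show "f x \<le> max 1 B"
      using R1[of x] R2[of x] B[of x] by (cases "x \<ge> R1"; cases "x \<le> R2") auto
  qed simp
qed

definition f_bound :: real where "f_bound = (SOME M. M > 0 \<and> (\<forall>x. f x \<le> M))"

lemma f_bound_pos: "f_bound > 0" and f_le_f_bound: "f x \<le> f_bound"
  using someI_ex[OF f_bounded] unfolding f_bound_def by auto

lemma set_integrable_f: "A \<in> sets borel \<Longrightarrow> set_integrable lborel A f"
  using set_integrable_subset[of lborel UNIV f A] integrable_f by (simp add: set_integrable_def)

lemma F_eq_interval_integral: "F x = F c + (LBINT y=c..x. f y)"
proof (cases "c \<le> x")
  case True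
  have "{..x} = {..c} \<union> {c<..x}" using True by auto
  then have "F x = F c + (LBINT y:{c<..x}. f y)"
    unfolding F_eq_integral by (simp, subst set_integral_Un) (auto intro: set_integrable_f)
  then show ?thesis using True by (simp add: interval_integral_Ioc)
next
  case False
  have "{..c} = {..x} \<union> {x<..c}" using False by auto
  then have "F c = F x + (LBINT y:{x<..c}. f y)"
    unfolding F_eq_integral by (simp, subst set_integral_Un) (auto intro: set_integrable_f)
  moreover have "(LBINT y=c..x. f y) = - (LBINT y=x..c. f y)"
    by (rule interval_integral_endpoints_reverse)
  ultimately show ?thesis using False by (simp add: interval_integral_Ioc)
qed

lemma F_deriv: "(F has_real_derivative f x) (at x)"
proof -
  have "((\<lambda>u. LBINT y=x..u. f y) has_vector_derivative (f x)) (at x within {x-1..x+1})"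
    by (intro interval_integral_FTC2 continuous_at_imp_continuous_on ballI isCont_f) auto
  then have "((\<lambda>u. F x + (LBINT y=x..u. f y)) has_real_derivative (f x)) (at x)"
    by (auto simp: at_within_Icc_at has_real_derivative_iff_has_vector_derivative
        intro!: derivative_eq_intros)
  then show ?thesis by (simp flip: F_eq_interval_integral)
qed

lemma isCont_F: "isCont F x"
  using F_deriv by (rule DERIV_isCont)

lemma F_measurable[measurable]: "F \<in> borel_measurable borel"
  by (intro borel_measurable_continuous_onI continuous_at_imp_continuous_on ballI isCont_F)

lemma F_nonneg: "F x \<ge> 0"
  unfolding F_eq_integral set_lebesgue_integral_def
  by (rule integral_nonneg_AE) (auto simp: f_nonneg)

lemma F_le_1: "F x \<le> 1"
proof -
  have "F x \<le> (LINT z|lborel. f z)"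
    unfolding F_eq_integral set_lebesgue_integral_def
    by (rule integral_mono[OF set_integrable_f[of "{..x}", unfolded set_integrable_def] integrable_f])
       (auto simp: f_nonneg indicator_def)
  then show ?thesis using integral_f by simp
qed

lemma F_at_top: "(F \<longlongrightarrow> 1) at_top"
proof -
  have "((\<lambda>t. LINT z|lborel. indicator {..t} z *\<^sub>R f z) \<longlongrightarrow> (LINT z|lborel. f z)) at_top"
  proof (rule integral_dominated_convergence_at_top[where w=f])
    show "AE z in lborel. ((\<lambda>t. indicator {..t} z *\<^sub>R f z) \<longlongrightarrow> f z) at_top"
    proof (intro AE_I2 tendsto_eventually)
      fix z show "\<forall>\<^sub>F t in at_top. indicator {..t} z *\<^sub>R f z = f z"
        by (rule eventually_at_top_linorderI[of z]) simp
    qed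
    show "\<forall>\<^sub>F i in at_top. AE x in lborel. norm (indicator {..i} x *\<^sub>R f x) \<le> f x"
      by (auto simp: indicator_def f_nonneg)
  qed (auto simp: integrable_f)
  moreover have "F = (\<lambda>t. LINT z|lborel. indicator {..t} z *\<^sub>R f z)"
    by (rule ext) (simp add: F_eq_integral set_lebesgue_integral_def)
  ultimately show ?thesis by (simp only: integral_f)
qed

lemma F_at_bot: "(F \<longlongrightarrow> 0) at_bot"
proof -
  have "((\<lambda>t. LINT z|lborel. indicator {..-t} z *\<^sub>R f z) \<longlongrightarrow> (LINT z|lborel. 0 * f z)) at_top"
  proof (rule integral_dominated_convergence_at_top[where w=f])
    show "AE z in lborel. ((\<lambda>t. indicator {..-t} z *\<^sub>R f z) \<longlongrightarrow> 0 * f z) at_top"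
    proof (intro AE_I2 tendsto_eventually)
      fix z show "\<forall>\<^sub>F t in at_top. indicator {..-t} z *\<^sub>R f z = 0 * f z"
        by (rule eventually_at_top_linorderI[of "-z+1"]) simp
    qed
    show "\<forall>\<^sub>F i in at_top. AE x in lborel. norm (indicator {..-i} x *\<^sub>R f x) \<le> f x"
      by (auto simp: indicator_def f_nonneg)
  qed (auto simp: integrable_f)
  then show ?thesis
    by (simp add: filterlim_at_bot_mirror F_eq_integral set_lebesgue_integral_def)
qed

lemma abs_prod_F_le_1: "\<bar>\<Prod>u\<in>A. F (g u)\<bar> \<le> 1"
  by (simp add: abs_prod prod_le_1 F_nonneg F_le_1)

lemma integrable_bounded_mult_f:
  assumes [measurable]: "g \<in> borel_measurable lborel" and bounded: "\<And>z. \<bar>g z\<bar> \<le> C"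
  shows "integrable lborel (\<lambda>z. g z * f z)"
proof (rule Bochner_Integration.integrable_bound[where f="\<lambda>z. C * f z"])
  show "integrable lborel (\<lambda>z. C * f z)" using integrable_f by simp
  have "C \<ge> 0" using bounded[of 0] by linarith
  then show "AE z in lborel. norm (g z * f z) \<le> norm (C * f z)"
    using bounded by (intro AE_I2) (simp add: abs_mult f_nonneg mult_right_mono)
qed simp

lemma abs_sum_f_prod_F_le:
  "\<bar>\<Sum>u\<in>U. f (g u) * \<gamma> u * (\<Prod>v\<in>V u. F (h u v))\<bar> \<le> (\<Sum>u\<in>U. \<bar>\<gamma> u\<bar>) * f_bound"
proof (rule order_trans[OF sum_abs], unfold sum_distrib_right, rule sum_mono)
  fix u
  have "\<bar>f (g u) * \<gamma> u * (\<Prod>v\<in>V u. F (h u v))\<bar> = \<bar>\<gamma> u\<bar> * (f (g u) * \<bar>\<Prod>v\<in>V u. F (h u v)\<bar>)"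
    by (simp add: abs_mult f_nonneg)
  also have "\<dots> \<le> \<bar>\<gamma> u\<bar> * (f_bound * 1)"
    by (intro mult_left_mono mult_mono f_le_f_bound abs_prod_F_le_1) (auto simp: less_imp_le[OF f_bound_pos])
  finally show "\<bar>f (g u) * \<gamma> u * (\<Prod>v\<in>V u. F (h u v))\<bar> \<le> \<bar>\<gamma> u\<bar> * f_bound" by simp
qed

lemma has_real_derivative_integral_prod_F:
  fixes c \<beta> :: "'a \<Rightarrow> real"
  assumes U: "finite U"
  shows "((\<lambda>t. LINT z|lborel. (\<Prod>u\<in>U. F (c u + \<beta> u * t + z)) * f z) has_real_derivative
     (LINT z|lborel. (\<Sum>u\<in>U. f (c u + \<beta> u * t0 + z) * \<beta> u *
         (\<Prod>v\<in>U-{u}. F (c v + \<beta> v * t0 + z))) * f z)) (at t0)"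
proof (rule has_real_derivative_integral_lborel[where r=1 and h="\<lambda>z. (\<Sum>u\<in>U. \<bar>\<beta> u\<bar>) * f_bound * f z"])
  fix t z
  have "((\<lambda>t. \<Prod>u\<in>U. F (c u + \<beta> u * t + z)) has_real_derivative
     (\<Sum>u\<in>U. f (c u + \<beta> u * t + z) * \<beta> u * (\<Prod>v\<in>U-{u}. F (c v + \<beta> v * t + z)))) (at t)"
    by (intro has_field_derivative_prod DERIV_chain2[OF F_deriv]) (auto intro!: derivative_eq_intros)
  then show "((\<lambda>t. (\<Prod>u\<in>U. F (c u + \<beta> u * t + z)) * f z) has_real_derivative
     (\<Sum>u\<in>U. f (c u + \<beta> u * t + z) * \<beta> u * (\<Prod>v\<in>U-{u}. F (c v + \<beta> v * t + z))) * f z) (at t)"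
    by (rule DERIV_cmult_right)
  show "\<bar>(\<Sum>u\<in>U. f (c u + \<beta> u * t + z) * \<beta> u * (\<Prod>v\<in>U-{u}. F (c v + \<beta> v * t + z))) * f z\<bar>
      \<le> (\<Sum>u\<in>U. \<bar>\<beta> u\<bar>) * f_bound * f z"
    unfolding abs_mult abs_of_nonneg[OF f_nonneg]
    by (intro mult_right_mono abs_sum_f_prod_F_le f_nonneg)
next
  fix t
  show "integrable lborel (\<lambda>z. (\<Prod>u\<in>U. F (c u + \<beta> u * t + z)) * f z)"
    by (rule integrable_bounded_mult_f[OF _ abs_prod_F_le_1]) (simp add: U)
qed (use integrable_f in auto)

lemma has_real_derivative_sum_f_prod_F:
  "((\<lambda>s. \<Sum>u\<in>U. f (\<alpha> u * s + z) * \<beta> u * (\<Prod>v\<in>U-{u}. F (\<alpha> v * s + z))) has_real_derivative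
     (\<Sum>u\<in>U. f' (\<alpha> u * s + z) * \<alpha> u * \<beta> u * (\<Prod>v\<in>U-{u}. F (\<alpha> v * s + z)) +
        f (\<alpha> u * s + z) * \<beta> u * (\<Sum>v\<in>U-{u}. f (\<alpha> v * s + z) * \<alpha> v * (\<Prod>w\<in>U-{u}-{v}. F (\<alpha> w * s + z)))))
   (at s)"
proof (rule DERIV_sum)
  fix u
  have "((\<lambda>s. F (\<alpha> v * s + z)) has_real_derivative f (\<alpha> v * s + z) * \<alpha> v) (at s)" for v
    by (rule DERIV_chain2[OF F_deriv]) (auto intro!: derivative_eq_intros)
  then have d_prod: "((\<lambda>s. \<Prod>v\<in>U-{u}. F (\<alpha> v * s + z)) has_real_derivative
      (\<Sum>v\<in>U-{u}. f (\<alpha> v * s + z) * \<alpha> v * (\<Prod>w\<in>U-{u}-{v}. F (\<alpha> w * s + z)))) (at s)"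
    by (rule has_field_derivative_prod)
  have d_f: "((\<lambda>s. f (\<alpha> u * s + z) * \<beta> u) has_real_derivative f' (\<alpha> u * s + z) * \<alpha> u * \<beta> u) (at s)"
    by (intro DERIV_cmult_right DERIV_chain2[OF f_deriv]) (auto intro!: derivative_eq_intros)
  from DERIV_mult[OF d_f d_prod]
  show "((\<lambda>s. f (\<alpha> u * s + z) * \<beta> u * (\<Prod>v\<in>U-{u}. F (\<alpha> v * s + z))) has_real_derivative
      f' (\<alpha> u * s + z) * \<alpha> u * \<beta> u * (\<Prod>v\<in>U-{u}. F (\<alpha> v * s + z)) +
      f (\<alpha> u * s + z) * \<beta> u * (\<Sum>v\<in>U-{u}. f (\<alpha> v * s + z) * \<alpha> v * (\<Prod>w\<in>U-{u}-{v}. F (\<alpha> w * s + z))))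
     (at s)"
    by (simp only: mult.commute[of _ "f (\<alpha> u * s + z) * \<beta> u"])
qed

lemma abs_deriv_sum_f_prod_F_le:
  assumes U: "finite U" and \<alpha>: "\<And>u. \<bar>\<alpha> u\<bar> \<le> 1" and s: "\<bar>s\<bar> \<le> \<delta>"
    and h_bound: "\<And>t. \<bar>t\<bar> \<le> \<delta> \<Longrightarrow> \<bar>f' (t + z)\<bar> * f z \<le> h z"
  shows "\<bar>(\<Sum>u\<in>U. f' (\<alpha> u * s + z) * \<alpha> u * \<beta> u * (\<Prod>v\<in>U-{u}. F (\<alpha> v * s + z)) +
        f (\<alpha> u * s + z) * \<beta> u * (\<Sum>v\<in>U-{u}. f (\<alpha> v * s + z) * \<alpha> v * (\<Prod>w\<in>U-{u}-{v}. F (\<alpha> w * s + z))))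
      * f z\<bar>
    \<le> (\<Sum>u\<in>U. \<bar>\<beta> u\<bar>) * (h z + (\<Sum>v\<in>U. \<bar>\<alpha> v\<bar>) * f_bound * f_bound * f z)"
proof -
  define C where "C = (\<Sum>v\<in>U. \<bar>\<alpha> v\<bar>) * f_bound * f_bound"
  define D where "D u = (\<Sum>v\<in>U-{u}. f (\<alpha> v * s + z) * \<alpha> v * (\<Prod>w\<in>U-{u}-{v}. F (\<alpha> w * s + z)))" for u
  have "0 \<le> \<bar>f' (0 + z)\<bar> * f z" by (simp add: f_nonneg)
  then have h_nonneg: "h z \<ge> 0" using h_bound[of 0] s by linarith
  have first: "\<bar>f' (\<alpha> u * s + z) * \<alpha> u * \<beta> u * (\<Prod>v\<in>U-{u}. F (\<alpha> v * s + z)) * f z\<bar> \<le> \<bar>\<beta> u\<bar> * h z" for u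
  proof -
    have "\<bar>\<alpha> u\<bar> * \<bar>s\<bar> \<le> 1 * \<delta>" using \<alpha>[of u] s by (intro mult_mono) auto
    then have h: "\<bar>f' (\<alpha> u * s + z)\<bar> * f z \<le> h z" by (intro h_bound) (simp add: abs_mult)
    have "\<bar>f' (\<alpha> u * s + z) * \<alpha> u * \<beta> u * (\<Prod>v\<in>U-{u}. F (\<alpha> v * s + z)) * f z\<bar>
      = (\<bar>f' (\<alpha> u * s + z)\<bar> * f z) * \<bar>\<beta> u\<bar> * (\<bar>\<alpha> u\<bar> * \<bar>\<Prod>v\<in>U-{u}. F (\<alpha> v * s + z)\<bar>)"
      by (simp add: abs_mult f_nonneg)
    also have "\<dots> \<le> h z * \<bar>\<beta> u\<bar> * 1"
      by (intro mult_mono h mult_le_one \<alpha> abs_prod_F_le_1) (auto simp: h_nonneg)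
    finally show ?thesis by (simp add: mult.commute)
  qed
  have second: "\<bar>f (\<alpha> u * s + z) * \<beta> u * D u * f z\<bar> \<le> \<bar>\<beta> u\<bar> * (C * f z)" for u
  proof -
    have "\<bar>D u\<bar> \<le> (\<Sum>v\<in>U-{u}. \<bar>\<alpha> v\<bar>) * f_bound"
      unfolding D_def by (rule abs_sum_f_prod_F_le)
    also have "\<dots> \<le> (\<Sum>v\<in>U. \<bar>\<alpha> v\<bar>) * f_bound"
      using U f_bound_pos by (intro mult_right_mono sum_mono2) auto
    finally have D: "\<bar>D u\<bar> \<le> (\<Sum>v\<in>U. \<bar>\<alpha> v\<bar>) * f_bound" .
    have "\<bar>f (\<alpha> u * s + z) * \<beta> u * D u * f z\<bar> = \<bar>\<beta> u\<bar> * (f (\<alpha> u * s + z) * \<bar>D u\<bar>) * f z"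
      by (simp add: abs_mult f_nonneg)
    also have "\<dots> \<le> \<bar>\<beta> u\<bar> * (f_bound * ((\<Sum>v\<in>U. \<bar>\<alpha> v\<bar>) * f_bound)) * f z"
      by (intro mult_right_mono mult_left_mono mult_mono f_le_f_bound D)
         (auto simp: f_nonneg less_imp_le[OF f_bound_pos])
    finally show ?thesis by (simp add: C_def mult_ac)
  qed
  have "\<bar>(\<Sum>u\<in>U. f' (\<alpha> u * s + z) * \<alpha> u * \<beta> u * (\<Prod>v\<in>U-{u}. F (\<alpha> v * s + z)) + f (\<alpha> u * s + z) * \<beta> u * D u)
      * f z\<bar>
    \<le> (\<Sum>u\<in>U. \<bar>(f' (\<alpha> u * s + z) * \<alpha> u * \<beta> u * (\<Prod>v\<in>U-{u}. F (\<alpha> v * s + z)) + f (\<alpha> u * s + z) * \<beta> u * D u)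
      * f z\<bar>)"
    unfolding sum_distrib_right by (rule sum_abs)
  also have "\<dots> \<le> (\<Sum>u\<in>U. \<bar>\<beta> u\<bar> * (h z + C * f z))"
    using first second by (intro sum_mono) (simp add: distrib_right distrib_left abs_triangle_ineq add_mono
        order_trans[OF abs_triangle_ineq])
  also have "\<dots> = (\<Sum>u\<in>U. \<bar>\<beta> u\<bar>) * (h z + C * f z)"
    by (simp add: sum_distrib_right)
  finally show ?thesis by (simp add: D_def C_def)
qed

lemma has_real_derivative_integral_sum_f_prod_F:
  fixes \<alpha> \<beta> :: "'a \<Rightarrow> real"
  assumes U: "finite U" and \<alpha>: "\<And>u. \<bar>\<alpha> u\<bar> \<le> 1"
  shows "((\<lambda>s. LINT z|lborel. (\<Sum>u\<in>U. f (\<alpha> u * s + z) * \<beta> u * (\<Prod>v\<in>U-{u}. F (\<alpha> v * s + z))) * f z)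
    has_real_derivative
     (LINT z|lborel. (\<Sum>u\<in>U. f' z * \<alpha> u * \<beta> u * (\<Prod>v\<in>U-{u}. F z) +
         f z * \<beta> u * (\<Sum>v\<in>U-{u}. f z * \<alpha> v * (\<Prod>w\<in>U-{u}-{v}. F z))) * f z)) (at 0)"
proof -
  obtain \<delta> h where \<delta>: "\<delta> > 0" and h: "integrable lborel h"
    and h_bound: "\<And>t z. \<bar>t\<bar> \<le> \<delta> \<Longrightarrow> \<bar>f' (t + z)\<bar> * f z \<le> h z"
    using f'_dominated by blast
  define Q' where "Q' s z = (\<Sum>u\<in>U. f' (\<alpha> u * s + z) * \<alpha> u * \<beta> u * (\<Prod>v\<in>U-{u}. F (\<alpha> v * s + z)) +
      f (\<alpha> u * s + z) * \<beta> u * (\<Sum>v\<in>U-{u}. f (\<alpha> v * s + z) * \<alpha> v * (\<Prod>w\<in>U-{u}-{v}. F (\<alpha> w * s + z))))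
    * f z" for s z
  have "((\<lambda>s. LINT z|lborel. (\<Sum>u\<in>U. f (\<alpha> u * s + z) * \<beta> u * (\<Prod>v\<in>U-{u}. F (\<alpha> v * s + z))) * f z)
      has_real_derivative (LINT z|lborel. Q' 0 z)) (at 0)"
  proof (rule has_real_derivative_integral_lborel[where r=\<delta>
        and h="\<lambda>z. (\<Sum>u\<in>U. \<bar>\<beta> u\<bar>) * (h z + (\<Sum>v\<in>U. \<bar>\<alpha> v\<bar>) * f_bound * f_bound * f z)"])
    show "((\<lambda>s. (\<Sum>u\<in>U. f (\<alpha> u * s + z) * \<beta> u * (\<Prod>v\<in>U-{u}. F (\<alpha> v * s + z))) * f z)
      has_real_derivative Q' s z) (at s)" for s z
      unfolding Q'_def by (intro DERIV_cmult_right has_real_derivative_sum_f_prod_F)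
    show "integrable lborel (\<lambda>z. (\<Sum>u\<in>U. f (\<alpha> u * s + z) * \<beta> u * (\<Prod>v\<in>U-{u}. F (\<alpha> v * s + z))) * f z)"
      for s by (rule integrable_bounded_mult_f[OF _ abs_sum_f_prod_F_le]) simp
    show "\<bar>Q' s z\<bar> \<le> (\<Sum>u\<in>U. \<bar>\<beta> u\<bar>) * (h z + (\<Sum>v\<in>U. \<bar>\<alpha> v\<bar>) * f_bound * f_bound * f z)"
      if "\<bar>s - 0\<bar> < \<delta>" for s z
      unfolding Q'_def using that by (intro abs_deriv_sum_f_prod_F_le U \<alpha> h_bound) auto
  qed (use \<delta> h integrable_f in \<open>auto simp: Q'_def\<close>)
  then show ?thesis by (simp add: Q'_def)
qed

lemma integral_F_pow_mult_f: "(LINT z|lborel. F z ^ m * f z) = 1 / (real m + 1)"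
proof -
  have "(LBINT x=-\<infinity>..\<infinity>. F x ^ m * f x) = 1 / (real m + 1) - 0"
  proof (rule interval_integral_FTC_nonneg[where F="\<lambda>x. F x ^ Suc m / (real m + 1)"])
    fix x
    show "((\<lambda>x. F x ^ Suc m / (real m + 1)) has_real_derivative F x ^ m * f x) (at x)"
      by ((rule derivative_eq_intros refl F_deriv | simp)+, simp add: field_simps add.commute)
    show "isCont (\<lambda>x. F x ^ m * f x) x"
      by (intro continuous_intros isCont_F isCont_f)
  next
    show "AE x in lborel. - \<infinity> < ereal x \<longrightarrow> ereal x < \<infinity> \<longrightarrow> 0 \<le> F x ^ m * f x"
      by (auto simp: F_nonneg f_nonneg)
    show "(((\<lambda>x. F x ^ Suc m / (real m + 1)) \<circ> real_of_ereal) \<longlongrightarrow> 0) (at_right (- \<infinity>))"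
      unfolding ereal_tendsto_simps1
      using tendsto_divide[OF tendsto_power[OF F_at_bot, of "Suc m"] tendsto_const[of "real m + 1"]] by simp
    show "(((\<lambda>x. F x ^ Suc m / (real m + 1)) \<circ> real_of_ereal) \<longlongrightarrow> 1 / (real m + 1)) (at_left \<infinity>)"
      unfolding ereal_tendsto_simps1
      using tendsto_divide[OF tendsto_power[OF F_at_top, of "Suc m"] tendsto_const[of "real m + 1"]] by simp
  qed simp
  then show ?thesis
    by (simp add: interval_lebesgue_integral_def set_lebesgue_integral_def)
qed

lemma integrable_f'_F_pow_mult_f: "integrable lborel (\<lambda>z. f' z * F z ^ n * f z)"
proof -
  obtain \<delta> h where \<delta>: "\<delta> > 0" and h: "integrable lborel h"
    and h_bound: "\<And>t z. \<bar>t\<bar> \<le> \<delta> \<Longrightarrow> \<bar>f' (t + z)\<bar> * f z \<le> h z"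
    using f'_dominated by blast
  show ?thesis
  proof (rule Bochner_Integration.integrable_bound[OF h])
    show "AE z in lborel. norm (f' z * F z ^ n * f z) \<le> norm (h z)"
    proof (rule AE_I2)
      fix z
      have "\<bar>f' z * F z ^ n * f z\<bar> = (\<bar>f' z\<bar> * f z) * F z ^ n"
        by (simp add: abs_mult f_nonneg F_nonneg)
      also have "\<dots> \<le> \<bar>f' z\<bar> * f z"
        by (intro mult_left_le power_le_one) (auto simp: F_nonneg F_le_1 f_nonneg)
      also have "\<dots> \<le> \<bar>h z\<bar>" using h_bound[of 0 z] \<delta> by simp
      finally show "norm (f' z * F z ^ n * f z) \<le> norm (h z)" by simp
    qed
  qed simp
qed

lemma integrable_f_f_F_pow_mult_f: "integrable lborel (\<lambda>z. f z * f z * F z ^ n * f z)"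
proof (rule integrable_bounded_mult_f)
  fix z
  have "f z * f z \<le> f_bound * f_bound"
    by (intro mult_mono f_le_f_bound) (auto simp: f_nonneg less_imp_le[OF f_bound_pos])
  moreover have "F z ^ n \<le> 1" by (intro power_le_one F_nonneg F_le_1)
  ultimately have "f z * f z * F z ^ n \<le> f_bound * f_bound * 1"
    by (rule mult_mono) (auto simp: F_nonneg)
  then show "\<bar>f z * f z * F z ^ n\<bar> \<le> f_bound * f_bound * 1"
    by (simp add: abs_mult f_nonneg F_nonneg)
qed simp

text \<open>Integration by parts against \<open>f\<^sup>2 F\<^sup>n\<close>, which vanishes at \<open>\<plusminus>\<infinity>\<close> since \<open>f\<close> does.\<close>
lemma integral_f'_F_pow_mult_f:
  "2 * (LINT z|lborel. f' z * F z ^ n * f z) + real n * (LINT z|lborel. f z * f z * F z ^ (n - 1) * f z) = 0"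
proof -
  let ?G = "\<lambda>z. f z * f z * F z ^ n"
  let ?g = "\<lambda>z. 2 * (f' z * F z ^ n * f z) + real n * (f z * f z * F z ^ (n - 1) * f z)"
  have G_vanishes: "(?G \<longlongrightarrow> 0) L" if "(f \<longlongrightarrow> 0) L" for L
  proof (rule Lim_null_comparison[OF _ tendsto_mult[OF that that, simplified]])
    show "\<forall>\<^sub>F x in L. norm (f x * f x * F x ^ n) \<le> f x * f x"
      using F_nonneg F_le_1
      by (auto simp: abs_mult f_nonneg intro!: always_eventually mult_left_le power_le_one)
  qed
  have "(LBINT x=-\<infinity>..\<infinity>. ?g x) = 0 - 0"
  proof (rule interval_integral_FTC_integrable[where F="?G"])
    fix x
    have "(?G has_real_derivative ?g x) (at x)"
      by (rule derivative_eq_intros refl F_deriv f_deriv | simp)+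
    then show "(?G has_vector_derivative ?g x) (at x)"
      by (simp add: has_real_derivative_iff_has_vector_derivative)
    show "isCont ?g x"
      by (intro continuous_intros isCont_F isCont_f isCont_f')
  next
    show "set_integrable lborel (einterval (- \<infinity>) \<infinity>) ?g"
      using integrable_f'_F_pow_mult_f[of n] integrable_f_f_F_pow_mult_f[of "n - 1"]
      by (simp add: set_integrable_def)
    show "((?G \<circ> real_of_ereal) \<longlongrightarrow> 0) (at_right (- \<infinity>))"
      unfolding ereal_tendsto_simps1 using f_at_bot by (rule G_vanishes)
    show "((?G \<circ> real_of_ereal) \<longlongrightarrow> 0) (at_left \<infinity>)"
      unfolding ereal_tendsto_simps1 using f_at_top by (rule G_vanishes)
  qed simp
  then have "(LINT x|lborel. ?g x) = 0"
    by (simp add: interval_lebesgue_integral_def set_lebesgue_integral_def)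
  then show ?thesis
    using integrable_f'_F_pow_mult_f[of n] integrable_f_f_F_pow_mult_f[of "n - 1"] by simp
qed

lemma integral_sum_f_prod_F:
  assumes U: "finite U"
  shows "(LINT z|lborel. (\<Sum>u\<in>U. f z * \<gamma> u * (\<Prod>v\<in>U-{u}. F z)) * f z)
      = (\<Sum>u\<in>U. \<gamma> u) * (LINT z|lborel. f z * F z ^ (card U - 1) * f z)"
proof -
  have "(\<Sum>u\<in>U. f z * \<gamma> u * (\<Prod>v\<in>U-{u}. F z)) = (\<Sum>u\<in>U. \<gamma> u * (f z * F z ^ (card U - 1)))" for z
    using U by (intro sum.cong) (simp_all add: card_Diff_singleton mult_ac)
  then have "(\<Sum>u\<in>U. f z * \<gamma> u * (\<Prod>v\<in>U-{u}. F z)) = (\<Sum>u\<in>U. \<gamma> u) * (f z * F z ^ (card U - 1))" for z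
    by (simp add: sum_distrib_right)
  then show ?thesis by (simp add: mult.assoc)
qed

lemma integral_sum_f'_prod_F_sum_f_prod_F:
  assumes U: "finite U"
  shows "(LINT z|lborel. (\<Sum>u\<in>U. f' z * \<alpha> u * \<beta> u * (\<Prod>v\<in>U-{u}. F z) +
         f z * \<beta> u * (\<Sum>v\<in>U-{u}. f z * \<alpha> v * (\<Prod>w\<in>U-{u}-{v}. F z))) * f z)
    = (\<Sum>u\<in>U. \<alpha> u * \<beta> u) * (LINT z|lborel. f' z * F z ^ (card U - 1) * f z)
      + (\<Sum>u\<in>U. \<beta> u * (\<Sum>v\<in>U-{u}. \<alpha> v)) * (LINT z|lborel. f z * f z * F z ^ (card U - 2) * f z)"
proof -
  have "(\<Sum>u\<in>U. f' z * \<alpha> u * \<beta> u * (\<Prod>v\<in>U-{u}. F z) +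
         f z * \<beta> u * (\<Sum>v\<in>U-{u}. f z * \<alpha> v * (\<Prod>w\<in>U-{u}-{v}. F z)))
      = (\<Sum>u\<in>U. \<alpha> u * \<beta> u) * (f' z * F z ^ (card U - 1))
        + (\<Sum>u\<in>U. \<beta> u * (\<Sum>v\<in>U-{u}. \<alpha> v)) * (f z * f z * F z ^ (card U - 2))" for z
  proof -
    have "(\<Sum>v\<in>U-{u}. f z * \<alpha> v * (\<Prod>w\<in>U-{u}-{v}. F z)) = (\<Sum>v\<in>U-{u}. \<alpha> v) * (f z * F z ^ (card U - 2))"
      if "u \<in> U" for u
    proof -
      have "(\<Sum>v\<in>U-{u}. f z * \<alpha> v * (\<Prod>w\<in>U-{u}-{v}. F z)) = (\<Sum>v\<in>U-{u}. \<alpha> v * (f z * F z ^ (card U - 2)))"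
        using U that by (intro sum.cong) (simp_all add: card_Diff_singleton numeral_2_eq_2 mult_ac)
      then show ?thesis by (simp add: sum_distrib_right)
    qed
    moreover have "(\<Prod>v\<in>U-{u}. F z) = F z ^ (card U - 1)" if "u \<in> U" for u
      using U that by (simp add: card_Diff_singleton)
    ultimately have "(\<Sum>u\<in>U. f' z * \<alpha> u * \<beta> u * (\<Prod>v\<in>U-{u}. F z) +
         f z * \<beta> u * (\<Sum>v\<in>U-{u}. f z * \<alpha> v * (\<Prod>w\<in>U-{u}-{v}. F z)))
      = (\<Sum>u\<in>U. \<alpha> u * \<beta> u * (f' z * F z ^ (card U - 1))
             + \<beta> u * (\<Sum>v\<in>U-{u}. \<alpha> v) * (f z * f z * F z ^ (card U - 2)))"
      by (intro sum.cong) (simp_all add: mult_ac)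
    then show ?thesis by (simp add: sum.distrib sum_distrib_right)
  qed
  then show ?thesis
    using integrable_f'_F_pow_mult_f integrable_f_f_F_pow_mult_f by (simp add: distrib_right mult.assoc)
qed

section \<open>The Hessian of \<open>-log p\<^sub>y\<^sub>,\<^sub>S\<close>\<close>

lemma dpk0_eq_integral:
  assumes k: "k \<ge> 2"
  shows "dpk0 F f k = (LINT z|lborel. f z * F z ^ (k - 2) * f z)"
proof -
  define U where "U = {1..k-1}"
  define e where "e v = (if v = (1::nat) then 1 else 0 :: real)" for v
  have U: "finite U" unfolding U_def by simp
  have "(\<lambda>t. pk F f k (\<lambda>v. if v = 1 then t else 0)) =
        (\<lambda>t. LINT z|lborel. (\<Prod>u\<in>U. F ((\<lambda>_. 0) u + e u * t + z)) * f z)"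
    unfolding pk_def U_def e_def
    by (intro ext Bochner_Integration.integral_cong[OF refl] arg_cong2[where f=times, OF _ refl] prod.cong) auto
  moreover have "((\<lambda>t. LINT z|lborel. (\<Prod>u\<in>U. F ((\<lambda>_. 0) u + e u * t + z)) * f z) has_real_derivative
      (LINT z|lborel. (\<Sum>u\<in>U. f z * e u * (\<Prod>v\<in>U-{u}. F z)) * f z)) (at 0)"
    using has_real_derivative_integral_prod_F[OF U, of "\<lambda>_. 0" e 0] by simp
  moreover have "(LINT z|lborel. (\<Sum>u\<in>U. f z * e u * (\<Prod>v\<in>U-{u}. F z)) * f z)
      = (\<Sum>u\<in>U. e u) * (LINT z|lborel. f z * F z ^ (card U - 1) * f z)"
    by (rule integral_sum_f_prod_F[OF U])
  moreover have "(\<Sum>u\<in>U. e u) = 1" and "card U - 1 = k - 2"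
    using k by (simp_all add: U_def e_def)
  ultimately show ?thesis unfolding dpk0_def by (simp add: DERIV_imp_deriv)
qed

lemma pyS_along_axes:
  "pyS F f S y (s *\<^sub>R axis i 1 + t *\<^sub>R axis j 1) =
    (LINT z|lborel. (\<Prod>u\<in>S-{y}. F (basis_diff y u i * s + basis_diff y u j * t + z)) * f z)"
  unfolding pyS_def
  by (intro Bochner_Integration.integral_cong[OF refl] arg_cong2[where f=times, OF _ refl] prod.cong)
     (simp_all add: axis_def basis_diff_def algebra_simps)

lemma hessian_neg_log_pyS:
  fixes S :: "'n::finite set"
  assumes y: "y \<in> S" and k2: "card S \<ge> 2"
  defines "k \<equiv> real (card S)" and "a \<equiv> dpk0 F f (card S)"
    and "b \<equiv> LINT z|lborel. f z * f z * F z ^ (card S - 3) * f z"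
  shows "hessian (\<lambda>\<theta>. - ln (pyS F f S y \<theta>)) 0 $ i $ j
    = k\<^sup>2 * b / 2 * (\<Sum>u\<in>S-{y}. basis_diff y u i * basis_diff y u j)
      + (k\<^sup>2 * a\<^sup>2 - k * b) * (\<Sum>u\<in>S-{y}. basis_diff y u i) * (\<Sum>u\<in>S-{y}. basis_diff y u j)"
proof -
  define U where "U = S - {y}"
  define n where "n = card U"
  define \<alpha> where "\<alpha> u = basis_diff y u i" for u
  define \<beta> where "\<beta> u = basis_diff y u j" for u
  define c where "c = (LINT z|lborel. f' z * F z ^ (n - 1) * f z)"
  define g where "g s t = (LINT z|lborel. (\<Prod>u\<in>U. F (\<alpha> u * s + \<beta> u * t + z)) * f z)" for s t
  define G where "G s = (LINT z|lborel. (\<Sum>u\<in>U. f (\<alpha> u * s + z) * \<beta> u *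
                             (\<Prod>v\<in>U-{u}. F (\<alpha> v * s + z))) * f z)" for s
  define G' where "G' = (\<Sum>u\<in>U. \<alpha> u * \<beta> u) * c + (\<Sum>u\<in>U. \<beta> u * (\<Sum>v\<in>U-{u}. \<alpha> v)) * b"
  have U: "finite U" by (simp add: U_def)
  have n: "card S = n + 1" "n \<ge> 1"
    using y k2 by (simp_all add: n_def U_def card_Diff_singleton)
  have a: "a = (LINT z|lborel. f z * F z ^ (n - 1) * f z)"
    using k2 n by (simp add: a_def dpk0_eq_integral)
  have dt: "((\<lambda>t. g s t) has_real_derivative G s) (at 0)" for s
    using has_real_derivative_integral_prod_F[OF U, of "\<lambda>u. \<alpha> u * s" \<beta> 0]
    by (simp add: g_def G_def)
  have "((\<lambda>s. g s 0) has_real_derivative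
      (LINT z|lborel. (\<Sum>u\<in>U. f z * \<alpha> u * (\<Prod>v\<in>U-{u}. F z)) * f z)) (at 0)"
    using has_real_derivative_integral_prod_F[OF U, of "\<lambda>_. 0" \<alpha> 0] by (simp add: g_def)
  then have ds: "((\<lambda>s. g s 0) has_real_derivative (\<Sum>u\<in>U. \<alpha> u) * a) (at 0)"
    by (simp only: integral_sum_f_prod_F[OF U] a n_def)
  have "(G has_real_derivative (LINT z|lborel. (\<Sum>u\<in>U. f' z * \<alpha> u * \<beta> u * (\<Prod>v\<in>U-{u}. F z) +
         f z * \<beta> u * (\<Sum>v\<in>U-{u}. f z * \<alpha> v * (\<Prod>w\<in>U-{u}-{v}. F z))) * f z)) (at 0)"
    unfolding G_def by (rule has_real_derivative_integral_sum_f_prod_F[OF U]) (simp add: \<alpha>_def abs_basis_diff_le_1)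
  moreover have "card S - 3 = card U - 2" using n by (simp add: n_def)
  ultimately have dG: "(G has_real_derivative G') (at 0)"
    by (simp only: integral_sum_f'_prod_F_sum_f_prod_F[OF U] G'_def c_def b_def n_def)
  have g00: "g 0 0 = 1 / k"
    using integral_F_pow_mult_f[of n] by (simp add: g_def n_def k_def n)
  have "G 0 = (LINT z|lborel. (\<Sum>u\<in>U. f z * \<beta> u * (\<Prod>v\<in>U-{u}. F z)) * f z)"
    by (simp add: G_def)
  then have G0: "G 0 = (\<Sum>u\<in>U. \<beta> u) * a"
    by (simp only: integral_sum_f_prod_F[OF U] a n_def)
  have c: "c = - (real n - 1) * b / 2"
    using integral_f'_F_pow_mult_f[of "n - 1"] n
    by (simp add: c_def b_def of_nat_diff field_simps numeral_3_eq_3)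
  have "hessian (\<lambda>\<theta>. - ln (pyS F f S y \<theta>)) 0 $ i $ j = deriv (\<lambda>s. deriv (\<lambda>t. - ln (g s t)) 0) 0"
    by (simp add: hessian_eq_deriv_deriv pyS_along_axes g_def U_def \<alpha>_def \<beta>_def)
  also have "\<dots> = - ((G' * g 0 0 - G 0 * ((\<Sum>u\<in>U. \<alpha> u) * a)) / (g 0 0)\<^sup>2)"
    using n by (intro deriv_deriv_neg_ln dt ds dG) (simp add: g00 k_def)
  also have "\<dots> = k\<^sup>2 * b / 2 * (\<Sum>u\<in>U. \<alpha> u * \<beta> u)
      + (k\<^sup>2 * a\<^sup>2 - k * b) * (\<Sum>u\<in>U. \<alpha> u) * (\<Sum>u\<in>U. \<beta> u)"
    using n by (simp add: g00 G0 G'_def c sum_mult_sum_remove[OF U] k_def power2_eq_square field_simps)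
  finally show ?thesis by (simp add: U_def \<alpha>_def \<beta>_def)
qed

lemma sum_sq_hessian_neg_log_pyS_le:
  fixes S :: "'n::finite set"
  assumes y: "y \<in> S" and k2: "card S \<ge> 2" and u: "u \<in> S - {y}"
    and nonpos: "hessian (\<lambda>\<theta>. - ln (pyS F f S y \<theta>)) 0 $ u $ y \<le> 0"
  shows "(\<Sum>i\<in>UNIV. \<Sum>j\<in>UNIV. (hessian (\<lambda>\<theta>. - ln (pyS F f S y \<theta>)) 0 $ i $ j)\<^sup>2)
    \<le> (real (card S) ^ 4 * (dpk0 F f (card S))\<^sup>2)\<^sup>2"
proof -
  define U where "U = S - {y}"
  define H where "H = hessian (\<lambda>\<theta>. - ln (pyS F f S y \<theta>)) 0"
  define k where "k = real (card S)"
  define a where "a = dpk0 F f (card S)"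
  define b where "b = (LINT z|lborel. f z * f z * F z ^ (card S - 3) * f z)"
  define \<kappa> where "\<kappa> = k\<^sup>2 * b / 2"
  define \<mu> where "\<mu> = k\<^sup>2 * a\<^sup>2 - k * b"
  have yU: "y \<notin> U" and card_U: "card S = card U + 1" "card U \<ge> 1"
    using y k2 by (auto simp: U_def card_Diff_singleton)
  have k: "k = real (card U) + 1" by (simp add: k_def card_U)
  have H: "H $ i $ j = \<kappa> * (\<Sum>u\<in>U. basis_diff y u i * basis_diff y u j)
      + \<mu> * (\<Sum>u\<in>U. basis_diff y u i) * (\<Sum>u\<in>U. basis_diff y u j)" for i j
    using hessian_neg_log_pyS[OF y k2, of i j]
    by (simp add: H_def U_def \<kappa>_def \<mu>_def k_def a_def b_def)
  have b: "b \<ge> 0"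
    unfolding b_def by (intro integral_nonneg_AE AE_I2) (simp add: f_nonneg F_nonneg)
  have "H $ u $ y = - (\<kappa> + \<mu> * real (card U))"
    using u yU by (auto simp: H U_def sum_basis_diff sum_basis_diff_mult algebra_simps)
  then have off_diagonal: "\<kappa> + \<mu> * real (card U) \<ge> 0"
    using nonpos by (simp add: H_def)
  have "(\<Sum>i\<in>UNIV. \<Sum>j\<in>UNIV. (H $ i $ j)\<^sup>2) \<le> (k ^ 4 * a\<^sup>2)\<^sup>2"
    unfolding H sum_sq_basis_diff_matrix[OF yU] \<kappa>_def \<mu>_def k
    by (rule sum_sq_basis_diff_matrix_le[OF card_U(2) b])
       (use off_diagonal in \<open>simp add: \<kappa>_def \<mu>_def k\<close>)
  then show ?thesis by (simp only: H_def k_def a_def)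
qed

end

theorem mainTheorem18:
  fixes F f f' :: "real \<Rightarrow> real" and S :: "'n::finite set"
  assumes std: "std_assumptions F f f'"
    and k2: "card S \<ge> 2"
    and neg: "\<forall>v\<in>S. \<forall>i j. i \<noteq> j \<longrightarrow>
               hessian (\<lambda>\<theta>. - ln (pyS F f S v \<theta>)) 0 $ i $ j \<le> 0"
  shows "\<forall>y\<in>S. spec_norm (hessian (\<lambda>\<theta>. - ln (pyS F f S y \<theta>)) 0)
                \<le> real (card S) ^ 4 * (dpk0 F f (card S))\<^sup>2"
proof
  fix y assume y: "y \<in> S"
  interpret std_density F f f' by (rule std_density.intro[OF std])
  have "card (S - {y}) \<ge> 1" using y k2 by (simp add: card_Diff_singleton)
  then obtain u where u: "u \<in> S - {y}" by (metis card.empty ex_in_conv not_one_le_zero)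
  let ?H = "hessian (\<lambda>\<theta>. - ln (pyS F f S y \<theta>)) 0"
  have "(\<Sum>i\<in>UNIV. \<Sum>j\<in>UNIV. (?H $ i $ j)\<^sup>2) \<le> (real (card S) ^ 4 * (dpk0 F f (card S))\<^sup>2)\<^sup>2"
    using neg y u by (intro sum_sq_hessian_neg_log_pyS_le[OF y k2 u]) auto
  then have "sqrt (\<Sum>i\<in>UNIV. \<Sum>j\<in>UNIV. (?H $ i $ j)\<^sup>2) \<le> real (card S) ^ 4 * (dpk0 F f (card S))\<^sup>2"
    using real_sqrt_le_mono by fastforce
  with spec_norm_le_frobenius[of ?H]
  show "spec_norm ?H \<le> real (card S) ^ 4 * (dpk0 F f (card S))\<^sup>2" by linarith
qed

end
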